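(* Let $|\!|\!|\cdot|\!|\!|\in \mathbf{N}_{X^n}$ and $x:=(x_1,\ldots,x_n)\in X^n$. Then (i) $\max\{|\!|\!|(0_X,x_2,\ldots,x_n)|\!|\!|,\ldots,|\!|\!|(x_1,\ldots,x_{n-1},0_X)|\!|\!|\}\le |\!|\!|x|\!|\!|$; (ii) $|\!|\!|(x_1,0_X,\ldots,0_X)|\!|\!|\le |\!|\!|(x_1,x_2,0_X,\ldots,0_X)|\!|\!|\le\ldots\le|\!|\!|(x_1,\ldots,x_{n-1},0_X)|\!|\!|\le|\!|\!|x|\!|\!|$; (iii) $|\!|\!|x|\!|\!|_{\infty}\le |\!|\!|x|\!|\!|\le|\!|\!|x|\!|\!|_1 \le n\cdot |\!|\!|x|\!|\!|_\infty$, where $|\!|\!|x|\!|\!|_1:=\|x_1\|+\ldots+\|x_n\|$ and $|\!|\!|x|\!|\!|_\infty:=\max\{\|x_1\|,\ldots,\|x_n\|\}$.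
   Context: Let $(X,\|\cdot\|)$ be a normed vector space and $n\ge 2$. $\mathbf{N}_{X^n}$ denotes the family of all norms $|\!|\!|\cdot|\!|\!|$ on $X^n$ satisfying (A1) sign-symmetry: $|\!|\!|(x_1,\ldots,x_n)|\!|\!|=|\!|\!|(\pm x_1,\ldots,\pm x_n)|\!|\!|$ for all $(x_1,\ldots,x_n)\in X^n$ and all choices of signs; and (A2) compatibility: $|\!|\!|(0_X,\ldots,0_X,v,0_X,\ldots,0_X)|\!|\!|=\|v\|$ for all $v\in X$, with $v$ in the $i$th position, for each $i=1,\ldots,n$. *)

theory Defs
  imports "HOL-Analysis.Analysis"
begin

text \<open>X^n is represented as the tuples x :: nat \<Rightarrow> 'a with x i = 0 for i \<ge> n;
  coordinate x_{i+1} of the paper is x i (0-based indexing).\<close>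

definition tuples :: "nat \<Rightarrow> (nat \<Rightarrow> 'a::real_normed_vector) set" where
  "tuples n = {x. \<forall>i\<ge>n. x i = 0}"

definition is_norm_on_tuples :: "nat \<Rightarrow> ((nat \<Rightarrow> 'a::real_normed_vector) \<Rightarrow> real) \<Rightarrow> bool" where
  "is_norm_on_tuples n N \<longleftrightarrow>
     (\<forall>x\<in>tuples n. 0 \<le> N x) \<and>
     (\<forall>x\<in>tuples n. N x = 0 \<longleftrightarrow> x = (\<lambda>_. 0)) \<and>
     (\<forall>x\<in>tuples n. \<forall>c::real. N (\<lambda>i. c *\<^sub>R x i) = \<bar>c\<bar> * N x) \<and>
     (\<forall>x\<in>tuples n. \<forall>y\<in>tuples n. N (\<lambda>i. x i + y i) \<le> N x + N y)"

definition sign_symmetric :: "nat \<Rightarrow> ((nat \<Rightarrow> 'a::real_normed_vector) \<Rightarrow> real) \<Rightarrow> bool" where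
  "sign_symmetric n N \<longleftrightarrow>
     (\<forall>x\<in>tuples n. \<forall>s::nat \<Rightarrow> real. (\<forall>i<n. s i = 1 \<or> s i = -1) \<longrightarrow>
        N (\<lambda>i. if i < n then s i *\<^sub>R x i else 0) = N x)"

definition compatible :: "nat \<Rightarrow> ((nat \<Rightarrow> 'a::real_normed_vector) \<Rightarrow> real) \<Rightarrow> bool" where
  "compatible n N \<longleftrightarrow>
     (\<forall>v. \<forall>i<n. N (\<lambda>j. if j = i then v else 0) = norm v)"

definition NXn :: "nat \<Rightarrow> ((nat \<Rightarrow> 'a::real_normed_vector) \<Rightarrow> real) set" where
  "NXn n = {N. is_norm_on_tuples n N \<and> sign_symmetric n N \<and> compatible n N}"

definition trunc :: "nat \<Rightarrow> (nat \<Rightarrow> 'a::zero) \<Rightarrow> nat \<Rightarrow> 'a" where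
  "trunc k x = (\<lambda>i. if i < k then x i else 0)"

end

theory Submission
  imports Defs
begin

text \<open>Flipping the sign of the \<open>i\<close>-th coordinate of \<open>y\<close> gives a vector \<open>z\<close> of the same norm,
  and \<open>y(i := 0)\<close> is the midpoint of \<open>y\<close> and \<open>z\<close>; the triangle inequality then shows that
  deleting coordinates never increases the norm. The lower bound \<open>\<parallel>x\<^sub>i\<parallel> \<le> N x\<close> follows
  by deleting all other coordinates and using compatibility; the upper bound
  \<open>N x \<le> \<Sum>\<parallel>x\<^sub>i\<parallel>\<close> is the triangle inequality applied to the decomposition of \<open>x\<close>
  into its coordinates.\<close>

lemma trunc_in_tuples: "x \<in> tuples n \<Longrightarrow> trunc k x \<in> tuples n"
  by (auto simp: tuples_def trunc_def)

lemma trunc_eq_fun_upd_trunc_Suc: "trunc k x = (trunc (Suc k) x)(k := 0)"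
  by (auto simp: trunc_def)

lemma trunc_eq_self: "x \<in> tuples n \<Longrightarrow> trunc n x = x"
  by (auto simp: tuples_def trunc_def)

lemma norm_on_tuples_zero_coordinate_le:
  assumes norm: "is_norm_on_tuples n N" and sym: "sign_symmetric n N" and y: "y \<in> tuples n"
  shows "N (y(i := 0)) \<le> N y"
proof (cases "i < n")
  case False
  then have "y(i := 0) = y" using y by (auto simp: tuples_def)
  then show ?thesis by simp
next
  case True
  define s :: "nat \<Rightarrow> real" where "s = (\<lambda>j. if j = i then -1 else 1)"
  define z where "z = (\<lambda>j. if j < n then s j *\<^sub>R y j else 0)"
  have "N z = N y" using sym y unfolding sign_symmetric_def z_def s_def by auto
  have z: "z \<in> tuples n" by (auto simp: z_def tuples_def)
  have sum: "(\<lambda>j. y j + z j) \<in> tuples n" using y z by (auto simp: tuples_def)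
  have midpoint: "y(i := 0) = (\<lambda>j. (1/2::real) *\<^sub>R (y j + z j))"
    using y \<open>i < n\<close> by (auto simp: z_def s_def tuples_def fun_eq_iff scaleR_2[symmetric])
  have "N (y(i := 0)) = 1/2 * N (\<lambda>j. y j + z j)"
    using norm sum unfolding midpoint is_norm_on_tuples_def by auto
  also have "\<dots> \<le> 1/2 * (N y + N z)" using norm y z unfolding is_norm_on_tuples_def by auto
  finally show ?thesis using \<open>N z = N y\<close> by simp
qed

lemma norm_on_tuples_restrict_le:
  assumes norm: "is_norm_on_tuples n N" and sym: "sign_symmetric n N" and y: "y \<in> tuples n"
  shows "N (\<lambda>j. if j \<in> S then y j else 0) \<le> N y"
proof -
  define v where "v m = (\<lambda>j. if j \<in> S \<or> m \<le> j then y j else 0)" for m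
  have v: "v m \<in> tuples n" for m using y by (auto simp: v_def tuples_def)
  have "N (v m) \<le> N y" for m
  proof (induction m)
    case 0
    then show ?case by (simp add: v_def)
  next
    case (Suc m)
    have "N (v (Suc m)) \<le> N (v m)"
    proof (cases "m \<in> S")
      case True
      then have "v (Suc m) = v m" by (auto simp: v_def fun_eq_iff Suc_le_eq)
      then show ?thesis by simp
    next
      case False
      then have "v (Suc m) = (v m)(m := 0)" by (auto simp: v_def fun_eq_iff)
      then show ?thesis using norm_on_tuples_zero_coordinate_le[OF norm sym v] by simp
    qed
    with Suc.IH show ?case by simp
  qed
  moreover have "v n = (\<lambda>j. if j \<in> S then y j else 0)" using y
    by (auto simp: v_def fun_eq_iff tuples_def)
  ultimately show ?thesis by metis
qed

lemma NXn_coordinate_le: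
  assumes N: "N \<in> NXn n" and x: "x \<in> tuples n" and i: "i < n"
  shows "norm (x i) \<le> N x"
proof -
  have "N (\<lambda>j. if j = i then x i else 0) = norm (x i)"
    using N i by (simp add: NXn_def compatible_def)
  moreover have "N (\<lambda>j. if j \<in> {i} then x j else 0) \<le> N x"
    using N x by (intro norm_on_tuples_restrict_le) (auto simp: NXn_def)
  ultimately show ?thesis by (simp cong: if_cong)
qed

lemma NXn_trunc_le_sum_norm:
  assumes N: "N \<in> NXn n" and x: "x \<in> tuples n" and "m \<le> n"
  shows "N (trunc m x) \<le> (\<Sum>i<m. norm (x i))"
  using \<open>m \<le> n\<close>
proof (induction m)
  case 0
  have "trunc 0 x = (\<lambda>_. 0)" "(\<lambda>_. 0) \<in> tuples n" by (simp_all add: trunc_def tuples_def)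
  then show ?case using N by (auto simp: NXn_def is_norm_on_tuples_def)
next
  case (Suc m)
  define e where "e = (\<lambda>j. if j = m then x m else 0)"
  have e: "e \<in> tuples n" using Suc.prems by (auto simp: e_def tuples_def)
  have split: "trunc (Suc m) x = (\<lambda>j. trunc m x j + e j)"
    by (auto simp: trunc_def e_def fun_eq_iff)
  have "N (trunc (Suc m) x) \<le> N (trunc m x) + N e"
    using N trunc_in_tuples[OF x] e unfolding split NXn_def is_norm_on_tuples_def by blast
  moreover have "N e = norm (x m)" using N Suc.prems by (simp add: NXn_def compatible_def e_def)
  ultimately show ?case using Suc by simp
qed

theorem proposition2p3:
  fixes n :: nat and N :: "(nat \<Rightarrow> 'a::real_normed_vector) \<Rightarrow> real" and x :: "nat \<Rightarrow> 'a"
  assumes "n \<ge> 2" and "N \<in> NXn n" and "x \<in> tuples n"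
  shows "Max {N (x(i := 0)) | i. i < n} \<le> N x
     \<and> ((\<forall>k. 1 \<le> k \<and> Suc k < n \<longrightarrow> N (trunc k x) \<le> N (trunc (Suc k) x))
         \<and> N (trunc (n - 1) x) \<le> N x)
     \<and> (Max {norm (x i) | i. i < n} \<le> N x \<and> N x \<le> (\<Sum>i<n. norm (x i))
         \<and> (\<Sum>i<n. norm (x i)) \<le> real n * Max {norm (x i) | i. i < n})"
proof -
  note N = assms(2) and x = assms(3)
  have norm: "is_norm_on_tuples n N" and sym: "sign_symmetric n N" using N by (auto simp: NXn_def)
  note delete_le = norm_on_tuples_zero_coordinate_le[OF norm sym]
  have "n \<noteq> 0" using assms(1) by simp
  have "Max {N (x(i := 0)) | i. i < n} \<le> N x"
    using delete_le[OF x] \<open>n \<noteq> 0\<close> by (subst Max_le_iff) auto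
  moreover have "N (trunc k x) \<le> N (trunc (Suc k) x)" for k
    using delete_le[OF trunc_in_tuples[OF x], of "Suc k" k] by (simp flip: trunc_eq_fun_upd_trunc_Suc)
  moreover have "N (trunc (n - 1) x) \<le> N x"
    using delete_le[OF x] trunc_eq_fun_upd_trunc_Suc[of "n - 1" x] trunc_eq_self[OF x] \<open>n \<noteq> 0\<close>
    by simp
  moreover have "Max {norm (x i) | i. i < n} \<le> N x"
    using NXn_coordinate_le[OF N x] \<open>n \<noteq> 0\<close> by (subst Max_le_iff) auto
  moreover have "N x \<le> (\<Sum>i<n. norm (x i))"
    using NXn_trunc_le_sum_norm[OF N x order_refl] trunc_eq_self[OF x] by simp
  moreover have "(\<Sum>i<n. norm (x i)) \<le> real n * Max {norm (x i) | i. i < n}"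
  proof -
    have "norm (x i) \<le> Max {norm (x i) | i. i < n}" if "i < n" for i
      using that by (auto intro: Max_ge)
    then show ?thesis
      using sum_bounded_above[of "{..<n}" "\<lambda>i. norm (x i)" "Max {norm (x i) | i. i < n}"] by simp
  qed
  ultimately show ?thesis by blast
qed

end
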